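(* Let $\mu$ be a strict partition and $g$ a function from strict partitions to $\mathbb{C}$. For $n\ge0$ let $$A(n)=\sum_{|\lambda/\mu|=n}f'_{\lambda/\mu}\,g(\lambda),\qquad B(n)=\sum_{|\lambda/\mu|=n}f'_{\lambda/\mu}\,Dg(\lambda),$$ the sums ranging over strict partitions $\lambda\supseteq\mu$ with $|\lambda|-|\mu|=n$. Then $A(n)=A(0)+\sum_{k=0}^{n-1}B(k)$ for all $n\ge0$.
   Context: A strict partition is a finite strictly decreasing sequence of positive integers $\lambda=(\lambda_1>\cdots>\lambda_\ell)$ (the empty sequence is allowed); $|\lambda|=\sum_i\lambda_i$, $\ell(\lambda)=\ell$, and $\lambda_i=0$ for $i>\ell(\lambda)$. The (shifted Young) diagram of $\lambda$ is the set of boxes $(i,j)$ with $1\le i\le\ell(\lambda)$, $i+1\le j\le i+\lambda_i$; $\lambda$ is identified with its diagram. Write $\lambda\supseteq\mu$ if $\lambda_i\ge\mu_i$ for all $i$; $\lambda/\mu$ is the set of boxes of $\lambda$ not in $\mu$, and $|\lambda/\mu|=|\lambda|-|\mu|$. $f_{\lambda/\mu}$ is the number of standard shifted Young tableaux of shape $\lambda/\mu$, i.e. bijective fillings of the boxes of $\lambda/\mu$ with $1,\dots,|\lambda/\mu|$ increasing from left to right along rows and from top to bottom along columns ($f_{\mu/\mu}=1$), and $f'_{\lambda/\mu}=2^{|\lambda|-|\mu|-\ell(\lambda)+\ell(\mu)}f_{\lambda/\mu}$. For a strict partition $\lambda$, $\lambda^+$ denotes any strict partition obtained from $\lambda$ by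 adding one box ($\lambda^+\supseteq\lambda$, $|\lambda^+|=|\lambda|+1$). The difference operator $D$ on functions $g$ of strict partitions is $$Dg(\lambda)=\sum_{\lambda^+:\ \ell(\lambda^+)>\ell(\lambda)}g(\lambda^+)+2\sum_{\lambda^+:\ \ell(\lambda^+)=\ell(\lambda)}g(\lambda^+)-g(\lambda).$$ *)

theory Defs
  imports Complex_Main
begin

text \<open>Strict partitions are represented as lists of naturals, strictly decreasing
  with positive entries; lambda_i is the (i-1)-th list entry for 1 <= i <= length,
  and 0 otherwise.\<close>

definition strict_part :: "nat list \<Rightarrow> bool" where
  "strict_part la \<longleftrightarrow> sorted_wrt (>) la \<and> (\<forall>x\<in>set la. 0 < x)"

definition part_at :: "nat list \<Rightarrow> nat \<Rightarrow> nat" where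
  "part_at la i = (if 1 \<le> i \<and> i \<le> length la then la ! (i - 1) else 0)"

definition part_size :: "nat list \<Rightarrow> nat" where
  "part_size la = sum_list la"

definition part_contains :: "nat list \<Rightarrow> nat list \<Rightarrow> bool" where
  "part_contains la mu \<longleftrightarrow> (\<forall>i. part_at mu i \<le> part_at la i)"

definition shifted_diagram :: "nat list \<Rightarrow> (nat \<times> nat) set" where
  "shifted_diagram la =
     {(i, j). 1 \<le> i \<and> i \<le> length la \<and> i + 1 \<le> j \<and> j \<le> i + part_at la i}"

definition standard_tableaux :: "(nat \<times> nat) set \<Rightarrow> ((nat \<times> nat) \<Rightarrow> nat) set" where
  "standard_tableaux S =
     {T. bij_betw T S {1..card S} \<and> (\<forall>x. x \<notin> S \<longrightarrow> T x = 0)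
        \<and> (\<forall>i j j'. (i, j) \<in> S \<and> (i, j') \<in> S \<and> j < j' \<longrightarrow> T (i, j) < T (i, j'))
        \<and> (\<forall>i i' j. (i, j) \<in> S \<and> (i', j) \<in> S \<and> i < i' \<longrightarrow> T (i, j) < T (i', j))}"

definition f_skew :: "nat list \<Rightarrow> nat list \<Rightarrow> nat" where
  "f_skew la mu = card (standard_tableaux (shifted_diagram la - shifted_diagram mu))"

definition f'_skew :: "nat list \<Rightarrow> nat list \<Rightarrow> complex" where
  "f'_skew la mu =
     (2::complex) powi (int (part_size la) - int (part_size mu) - int (length la) + int (length mu))
     * of_nat (f_skew la mu)"

definition add_box :: "nat list \<Rightarrow> nat list set" where
  "add_box la = {nu. strict_part nu \<and> part_contains nu la \<and> part_size nu = part_size la + 1}"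

definition Dop :: "(nat list \<Rightarrow> complex) \<Rightarrow> nat list \<Rightarrow> complex" where
  "Dop g la =
     (\<Sum>nu\<in>{nu\<in>add_box la. length nu > length la}. g nu)
     + 2 * (\<Sum>nu\<in>{nu\<in>add_box la. length nu = length la}. g nu) - g la"

definition skew_set :: "nat list \<Rightarrow> nat \<Rightarrow> nat list set" where
  "skew_set mu n = {la. strict_part la \<and> part_contains la mu \<and> part_size la = part_size mu + n}"

end

theory Submission
  imports Defs
begin

text \<open>Removing the largest entry of a standard shifted tableau of shape \<open>\<nu>/\<mu>\<close> leaves a
  standard tableau of shape \<open>\<lambda>/\<mu>\<close>, where \<open>\<nu>/\<lambda>\<close> is the box that held the entry; this box
  is a corner of \<open>\<nu>\<close>, so \<open>\<lambda>\<close> is again a strict partition, and every \<open>\<lambda>\<close> with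
  \<open>\<mu> \<subseteq> \<lambda>\<close>, \<open>\<nu> = \<lambda>\<^sup>+\<close> arises this way. Hence \<open>f\<close> of \<open>\<nu>/\<mu>\<close> is the sum of \<open>f\<close> of
  \<open>\<lambda>/\<mu>\<close> over these \<open>\<lambda>\<close>. Passing to \<open>f'\<close>, the power of two grows by one exactly when
  the box is added to an existing row, which is the weight \<open>2\<close> in \<open>D\<close>. Summing against
  \<open>g\<close> gives \<open>A(k+1) = \<Sum>\<^sub>\<lambda> f'\<^sub>\<lambda>\<^sub>/\<^sub>\<mu> (Dg(\<lambda>) + g(\<lambda>)) = A(k) + B(k)\<close>, and the claim telescopes.\<close>

lemma part_at_0 [simp]: "part_at la 0 = 0"
  unfolding part_at_def by auto

lemma part_at_pos_imp_index: "0 < part_at la i \<Longrightarrow> 1 \<le> i \<and> i \<le> length la"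
  unfolding part_at_def by (auto split: if_splits)

lemma part_at_beyond_length: "length la < i \<Longrightarrow> part_at la i = 0"
  unfolding part_at_def by auto

lemma strict_part_at_pos:
  "strict_part la \<Longrightarrow> 1 \<le> i \<Longrightarrow> i \<le> length la \<Longrightarrow> 0 < part_at la i"
  unfolding part_at_def strict_part_def by auto

lemma sorted_wrt_greater_nth_gap:
  assumes "sorted_wrt (>) (xs :: nat list)" "j < length xs" "i < j"
  shows "xs ! j + (j - i) \<le> xs ! i"
  using assms(2,3)
proof (induction j)
  case (Suc j)
  have "xs ! Suc j < xs ! j"
    using assms(1) Suc.prems by (simp add: sorted_wrt_iff_nth_less)
  then show ?case
    using Suc by (cases "i = j") auto
qed simp

lemma strict_part_at_gap:
  assumes "strict_part la" "1 \<le> i" "i < j" "0 < part_at la j"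
  shows "part_at la j + (j - i) \<le> part_at la i"
proof -
  have j: "j \<le> length la" using part_at_pos_imp_index[OF assms(4)] by simp
  have "la ! (j - 1) + ((j - 1) - (i - 1)) \<le> la ! (i - 1)"
    using assms j by (intro sorted_wrt_greater_nth_gap) (auto simp: strict_part_def)
  then show ?thesis using assms j unfolding part_at_def by auto
qed

lemma strict_part_eqI:
  assumes "strict_part a" "strict_part b" "\<And>i. part_at a i = part_at b i"
  shows "a = b"
proof -
  have "length a = length b"
  proof (rule ccontr)
    have "\<not> length x < length y" if "strict_part y" "part_at x (length y) = part_at y (length y)"
      for x y :: "nat list"
      using that strict_part_at_pos[of y "length y"] part_at_beyond_length[of x "length y"]
      by (cases "length y = 0") auto
    moreover assume "length a \<noteq> length b"
    ultimately show False using assms by (metis linorder_neqE_nat)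
  qed
  moreover have "a ! k = b ! k" if "k < length a" for k
    using assms(3)[of "Suc k"] that \<open>length a = length b\<close> unfolding part_at_def by auto
  ultimately show ?thesis by (simp add: nth_equalityI)
qed

lemma part_contains_trans:
  "part_contains a b \<Longrightarrow> part_contains b c \<Longrightarrow> part_contains a c"
  unfolding part_contains_def by (meson order_trans)

lemma part_contains_length_le:
  assumes "strict_part la" "part_contains nu la"
  shows "length la \<le> length nu"
proof (cases "length la = 0")
  case False
  then have "0 < part_at la (length la)"
    using strict_part_at_pos[OF assms(1), of "length la"] by (simp add: Suc_le_eq)
  then have "0 < part_at nu (length la)"
    using assms(2) unfolding part_contains_def by (metis order_less_le_trans)
  then show ?thesis using part_at_pos_imp_index by blast
qed simp

lemma part_size_eq_sum_part_at:
  assumes "length la \<le> M"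
  shows "part_size la = (\<Sum>i = 1..M. part_at la i)"
proof -
  have "part_size la = (\<Sum>i<length la. la ! i)"
    by (simp add: part_size_def sum_list_sum_nth atLeast0LessThan)
  also have "\<dots> = (\<Sum>i = 1..length la. part_at la i)"
    by (rule sum.reindex_bij_witness[where i="\<lambda>i. i - 1" and j=Suc]) (auto simp: part_at_def)
  also have "\<dots> = (\<Sum>i = 1..M. part_at la i)"
    by (rule sum.mono_neutral_left) (use assms in \<open>auto simp: part_at_beyond_length\<close>)
  finally show ?thesis .
qed

lemma finite_strict_parts_of_size: "finite {la. strict_part la \<and> part_size la = m}"
proof (rule finite_subset)
  have "length xs \<le> sum_list xs" if "\<forall>x\<in>set xs. 0 < (x::nat)" for xs
    using that by (induction xs) auto
  then show "{la. strict_part la \<and> part_size la = m} \<subseteq> {xs. set xs \<subseteq> {0..m} \<and> length xs \<le> m}"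
    using member_le_sum_list by (fastforce simp: strict_part_def part_size_def)
  show "finite {xs. set xs \<subseteq> {0..m} \<and> length xs \<le> m}"
    by (rule finite_lists_length_le) simp
qed

lemma finite_skew_set: "finite (skew_set mu n)"
  by (rule finite_subset[OF _ finite_strict_parts_of_size[of "part_size mu + n"]])
    (auto simp: skew_set_def)

lemma finite_add_box: "finite (add_box la)"
  by (rule finite_subset[OF _ finite_strict_parts_of_size[of "part_size la + 1"]])
    (auto simp: add_box_def)

lemma shifted_diagram_eq:
  "shifted_diagram la = {(i, j). 1 \<le> i \<and> i + 1 \<le> j \<and> j \<le> i + part_at la i}"
  unfolding shifted_diagram_def using part_at_pos_imp_index[of la] by fastforce

lemma finite_shifted_diagram: "finite (shifted_diagram la)"
proof (rule finite_subset)
  have "part_at la i \<le> sum_list la" for i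
    unfolding part_at_def by (auto intro!: member_le_sum_list)
  then show "shifted_diagram la \<subseteq> {0..length la} \<times> {0..length la + sum_list la}"
    unfolding shifted_diagram_def by clarsimp (meson add_mono le_trans)
qed simp

lemma part_contains_imp_diagram_subset:
  "part_contains nu la \<Longrightarrow> shifted_diagram la \<subseteq> shifted_diagram nu"
  unfolding part_contains_def shifted_diagram_eq by (auto intro: order_trans)

definition adds_box_at :: "nat list \<Rightarrow> nat list \<Rightarrow> nat \<Rightarrow> bool" where
  "adds_box_at la nu r \<longleftrightarrow>
     1 \<le> r \<and> part_at nu r = Suc (part_at la r) \<and> (\<forall>i. i \<noteq> r \<longrightarrow> part_at nu i = part_at la i)"

lemma add_box_imp_adds_box_at:
  assumes "strict_part la" "nu \<in> add_box la"
  obtains r where "adds_box_at la nu r"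
proof -
  have le: "\<And>i. part_at la i \<le> part_at nu i" and sz: "part_size nu = part_size la + 1"
    using assms(2) by (auto simp: add_box_def part_contains_def)
  define M where "M = length nu"
  have lM: "length la \<le> M"
    using part_contains_length_le[OF assms(1)] assms(2) by (simp add: M_def add_box_def)
  have "(\<Sum>i = 1..M. part_at nu i - part_at la i) = Suc 0"
    using sz le part_size_eq_sum_part_at[OF lM] part_size_eq_sum_part_at[of nu M]
    by (simp add: M_def sum_subtractf_nat)
  then obtain r where r: "r \<in> {1..M}" "part_at nu r - part_at la r = Suc 0"
    "\<forall>i\<in>{1..M}. r \<noteq> i \<longrightarrow> part_at nu i - part_at la i = 0"
    by (subst (asm) sum_eq_Suc0_iff) auto
  have "part_at nu i = part_at la i" if "i \<noteq> r" for i
  proof (cases "i \<in> {1..M}")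
    case True then show ?thesis using r(3) that le[of i] by force
  next
    case False
    then have "i = 0 \<or> M < i" by auto
    then show ?thesis using lM part_at_beyond_length[of nu i] part_at_beyond_length[of la i]
      by (auto simp: M_def)
  qed
  with r(1,2) le[of r] have "adds_box_at la nu r" by (auto simp: adds_box_at_def)
  then show thesis by (rule that)
qed

lemma adds_box_at_imp_contains: "adds_box_at la nu r \<Longrightarrow> part_contains nu la"
  unfolding adds_box_at_def part_contains_def by (metis le_refl lessI less_imp_le_nat)

lemma adds_box_at_imp_add_box:
  assumes "strict_part nu" "adds_box_at la nu r"
  shows "nu \<in> add_box la"
proof -
  define M where "M = length nu + length la"
  have r: "1 \<le> r" "part_at nu r = Suc (part_at la r)" "\<forall>i. i \<noteq> r \<longrightarrow> part_at nu i = part_at la i"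
    using assms(2) by (auto simp: adds_box_at_def)
  then have rM: "r \<in> {1..M}" using part_at_pos_imp_index[of nu r] M_def by auto
  have "(\<Sum>i\<in>{1..M} - {r}. part_at nu i) = (\<Sum>i\<in>{1..M} - {r}. part_at la i)"
    using r by (intro sum.cong) auto
  then have "part_size nu = part_size la + 1"
    using part_size_eq_sum_part_at[of nu M] part_size_eq_sum_part_at[of la M] rM r(2)
    by (simp add: M_def sum.remove)
  then show ?thesis
    using assms adds_box_at_imp_contains by (auto simp: add_box_def)
qed

lemma adds_box_at_diagram:
  assumes "adds_box_at la nu r"
  shows "(r, r + part_at nu r) \<in> shifted_diagram nu"
    and "shifted_diagram la = shifted_diagram nu - {(r, r + part_at nu r)}"
proof -
  have r: "1 \<le> r" "part_at nu r = Suc (part_at la r)" "\<forall>i. i \<noteq> r \<longrightarrow> part_at nu i = part_at la i"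
    using assms by (auto simp: adds_box_at_def)
  then show "(r, r + part_at nu r) \<in> shifted_diagram nu"
    by (simp add: shifted_diagram_eq)
  show "shifted_diagram la = shifted_diagram nu - {(r, r + part_at nu r)}"
  proof (rule set_eqI, clarify)
    fix i j
    show "((i, j) \<in> shifted_diagram la) = ((i, j) \<in> shifted_diagram nu - {(r, r + part_at nu r)})"
      using r by (cases "i = r") (auto simp: shifted_diagram_eq)
  qed
qed

lemma adds_box_at_unique:
  assumes "strict_part l1" "strict_part l2" "adds_box_at l1 nu r" "adds_box_at l2 nu r"
  shows "l1 = l2"
proof (rule strict_part_eqI[OF assms(1,2)])
  fix i
  show "part_at l1 i = part_at l2 i"
    using assms(3,4) unfolding adds_box_at_def by (metis Suc_inject)
qed

text \<open>Strictness of \<open>\<lambda>\<close> is what makes the new box a corner of \<open>\<nu>\<close>: no box of \<open>\<nu>\<close> lies below it.\<close>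

lemma adds_box_at_corner:
  assumes "strict_part la" "adds_box_at la nu r"
  shows "(r, j) \<in> shifted_diagram nu \<Longrightarrow> j \<le> r + part_at nu r"
    and "(i, r + part_at nu r) \<in> shifted_diagram nu \<Longrightarrow> i \<le> r"
proof -
  assume "(r, j) \<in> shifted_diagram nu"
  then show "j \<le> r + part_at nu r" by (simp add: shifted_diagram_eq)
next
  have r: "1 \<le> r" "part_at nu r = Suc (part_at la r)" "\<forall>i. i \<noteq> r \<longrightarrow> part_at nu i = part_at la i"
    using assms(2) by (auto simp: adds_box_at_def)
  assume box: "(i, r + part_at nu r) \<in> shifted_diagram nu"
  show "i \<le> r"
  proof (rule ccontr)
    assume "\<not> i \<le> r"
    then have ri: "r < i" by simp
    then have h: "r + part_at nu r \<le> i + part_at la i" "i + 1 \<le> r + part_at nu r"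
      using box r(3) by (auto simp: shifted_diagram_eq)
    then have "0 < part_at la i" using r(2) by linarith
    from strict_part_at_gap[OF assms(1) r(1) ri this] h r(2) ri show False by linarith
  qed
qed

lemma add_box_length:
  assumes "strict_part la" "nu \<in> add_box la"
  shows "length nu = length la \<or> length nu = length la + 1"
proof -
  have snu: "strict_part nu" and "part_contains nu la"
    using assms(2) by (auto simp: add_box_def)
  then have ge: "length la \<le> length nu" using part_contains_length_le[OF assms(1)] by simp
  obtain r where r: "adds_box_at la nu r" using add_box_imp_adds_box_at[OF assms] .
  have "length nu \<le> length la + 1"
  proof (rule ccontr)
    assume "\<not> ?thesis"
    then have "part_at nu i \<noteq> part_at la i" if "i = length la + 1 \<or> i = length la + 2" for i
      using that strict_part_at_pos[OF snu, of i] part_at_beyond_length[of la i] by auto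
    then have "length la + 1 = r" "length la + 2 = r"
      using r unfolding adds_box_at_def by blast+
    then show False by simp
  qed
  then show ?thesis using ge by linarith
qed

lemma strict_part_butlast:
  assumes "strict_part nu"
  shows "strict_part (butlast nu)"
    and "part_at (butlast nu) i = (if i = length nu then 0 else part_at nu i)"
proof -
  show "strict_part (butlast nu)"
    using assms sorted_wrt_take[of "(>)" nu] in_set_butlastD
    by (fastforce simp: strict_part_def butlast_conv_take)
  show "part_at (butlast nu) i = (if i = length nu then 0 else part_at nu i)"
    by (auto simp: part_at_def nth_butlast)
qed

lemma strict_part_decrement:
  assumes "strict_part nu" "1 \<le> r" "r \<le> length nu" "2 \<le> part_at nu r"
    and gap: "r < length nu \<Longrightarrow> part_at nu (r + 1) + 1 < part_at nu r"
  defines "la \<equiv> nu[r - 1 := nu ! (r - 1) - 1]"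
  shows "strict_part la"
    and "part_at la i = (if i = r then part_at nu r - 1 else part_at nu i)"
proof -
  have srt: "sorted_wrt (>) nu" and pos: "\<forall>x\<in>set nu. 0 < x"
    using assms(1) by (auto simp: strict_part_def)
  have nur: "part_at nu r = nu ! (r - 1)" using assms(2,3) by (simp add: part_at_def)
  show "part_at la i = (if i = r then part_at nu r - 1 else part_at nu i)"
    using assms(2,3) by (auto simp: la_def part_at_def nth_list_update)
  have below: "nu ! j < nu ! (r - 1) - 1" if "r \<le> j" "j < length nu" for j
  proof -
    have "nu ! j \<le> nu ! r"
      using srt that by (cases "j = r") (auto simp: sorted_wrt_iff_nth_less intro: less_imp_le)
    moreover have "nu ! r + 1 < nu ! (r - 1)"
      using gap that nur by (simp add: part_at_def)
    ultimately show ?thesis by linarith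
  qed
  have "sorted_wrt (>) la"
    unfolding sorted_wrt_iff_nth_less
  proof (intro allI impI)
    fix i j assume ij: "i < j" "j < length la"
    then have jl: "j < length nu" and lt: "nu ! j < nu ! i"
      using srt by (auto simp: la_def sorted_wrt_iff_nth_less)
    consider "i = r - 1" | "j = r - 1" | "i \<noteq> r - 1" "j \<noteq> r - 1" by blast
    then show "la ! j < la ! i"
    proof cases
      case 1
      then have "r \<le> j" using ij assms(2) by linarith
      then show ?thesis using 1 below[of j] jl ij by (simp add: la_def)
    next
      case 2
      then show ?thesis using lt ij jl by (simp add: la_def nth_list_update)
    qed (simp add: la_def lt)
  qed
  moreover have "\<forall>y\<in>set la. 0 < y"
  proof
    fix y assume "y \<in> set la"
    then have "y \<in> insert (nu ! (r - 1) - 1) (set nu)"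
      using set_update_subset_insert unfolding la_def by fast
    then show "0 < y" using pos assms(4) nur by auto
  qed
  ultimately show "strict_part la" by (simp add: strict_part_def)
qed

lemma removable_corner:
  assumes "strict_part nu" "1 \<le> r" "1 \<le> part_at nu r"
    and "part_at nu (r + 1) = 0 \<or> part_at nu (r + 1) + 1 < part_at nu r"
  obtains la where "strict_part la" "adds_box_at la nu r"
proof -
  have rl: "r \<le> length nu" using part_at_pos_imp_index[of nu r] assms(3) by simp
  show thesis
  proof (cases "part_at nu r = 1")
    case True
    then have "\<not> r + 1 \<le> length nu"
      using assms(4) strict_part_at_pos[OF assms(1), of "r + 1"] by auto
    then have "r = length nu" using rl by simp
    then show thesis
      using that strict_part_butlast[OF assms(1)] True assms(2) by (simp add: adds_box_at_def)
  next
    case False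
    have "r < length nu \<Longrightarrow> part_at nu (r + 1) + 1 < part_at nu r"
      using assms(4) strict_part_at_pos[OF assms(1), of "r + 1"] by auto
    note dec = strict_part_decrement[OF assms(1,2) rl _ this]
    show thesis
      using that dec False assms(3) assms(2) by (simp add: adds_box_at_def)
  qed
qed

lemma standard_tableau_range:
  "T \<in> standard_tableaux S \<Longrightarrow> x \<in> S \<Longrightarrow> T x \<in> {1..card S}"
  unfolding standard_tableaux_def bij_betw_def by auto

lemma finite_standard_tableaux:
  assumes "finite S"
  shows "finite (standard_tableaux S)"
proof (rule finite_subset)
  show "standard_tableaux S \<subseteq> {T. \<forall>x. (x \<in> S \<longrightarrow> T x \<in> {1..card S}) \<and> (x \<notin> S \<longrightarrow> T x = 0)}"
    using standard_tableau_range by (auto simp: standard_tableaux_def)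
  show "finite {T. \<forall>x. (x \<in> S \<longrightarrow> T x \<in> {1..card S}) \<and> (x \<notin> S \<longrightarrow> T x = (0::nat))}"
    using assms by (intro finite_set_of_finite_funs) auto
qed

lemma card_standard_tableaux_by_max_entry:
  assumes "finite S" "S \<noteq> {}"
  shows "card (standard_tableaux S) = (\<Sum>b\<in>S. card {T \<in> standard_tableaux S. T b = card S})"
proof -
  have "standard_tableaux S = (\<Union>b\<in>S. {T \<in> standard_tableaux S. T b = card S})"
  proof (intro equalityI subsetI)
    fix T assume T: "T \<in> standard_tableaux S"
    then have "card S \<in> T ` S"
      using assms by (simp add: standard_tableaux_def bij_betw_def Suc_le_eq card_gt_0_iff)
    then obtain b where "b \<in> S" "card S = T b" by (rule imageE)
    with T show "T \<in> (\<Union>b\<in>S. {T \<in> standard_tableaux S. T b = card S})" by (intro UN_I) auto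
  qed auto
  also have "card \<dots> = (\<Sum>b\<in>S. card {T \<in> standard_tableaux S. T b = card S})"
  proof (rule card_UN_disjoint)
    show "\<forall>b\<in>S. finite {T \<in> standard_tableaux S. T b = card S}"
      using finite_standard_tableaux[OF assms(1)] by auto
    show "\<forall>b\<in>S. \<forall>b'\<in>S. b \<noteq> b' \<longrightarrow>
        {T \<in> standard_tableaux S. T b = card S} \<inter> {T \<in> standard_tableaux S. T b' = card S} = {}"
    proof (intro ballI impI)
      fix b b' assume "b \<in> S" "b' \<in> S" "b \<noteq> b'"
      then have "T b' \<noteq> card S" if "T \<in> standard_tableaux S" "T b = card S" for T
        using that inj_on_contraD[of T S b b'] by (simp add: standard_tableaux_def bij_betw_def)
      then show "{T \<in> standard_tableaux S. T b = card S} \<inter> {T \<in> standard_tableaux S. T b' = card S} = {}"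
        by blast
    qed
  qed (rule assms(1))
  finally show ?thesis .
qed

lemma standard_tableau_delete_max:
  assumes "finite S" "b \<in> S" "T \<in> standard_tableaux S" "T b = card S"
  shows "T(b := 0) \<in> standard_tableaux (S - {b})"
proof -
  have "bij_betw T (S - {b}) ({1..card S} - {card S})"
  proof (rule bij_betw_DiffI)
    show "bij_betw T S {1..card S}" using assms(3) by (simp add: standard_tableaux_def)
    show "bij_betw T {b} {card S}" using assms(4) by (simp add: bij_betw_def)
    show "{b} \<subseteq> S" using assms(2) by simp
    have "0 < card S" using assms(1,2) by (auto simp: card_gt_0_iff)
    then show "{card S} \<subseteq> {1..card S}" by simp
  qed
  moreover have "{1..card S} - {card S} = {1..card (S - {b})}"
    using assms(1,2) by auto
  ultimately have "bij_betw (T(b := 0)) (S - {b}) {1..card (S - {b})}"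
    using bij_betw_cong[of "S - {b}" "T(b := 0)" T] by simp
  moreover have "\<forall>x. x \<notin> S \<longrightarrow> T x = 0"
    and "\<forall>i j j'. (i, j) \<in> S \<and> (i, j') \<in> S \<and> j < j' \<longrightarrow> T (i, j) < T (i, j')"
    and "\<forall>i i' j. (i, j) \<in> S \<and> (i', j) \<in> S \<and> i < i' \<longrightarrow> T (i, j) < T (i', j)"
    using assms(3) by (simp_all add: standard_tableaux_def)
  ultimately show ?thesis
    unfolding standard_tableaux_def by simp
qed

lemma standard_tableau_insert_max:
  assumes "finite S" "(r, c) \<in> S" "T \<in> standard_tableaux (S - {(r, c)})"
    and row_end: "\<And>j. (r, j) \<in> S \<Longrightarrow> j \<le> c" and col_end: "\<And>i. (i, c) \<in> S \<Longrightarrow> i \<le> r"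
  shows "T((r, c) := card S) \<in> standard_tableaux S"
proof -
  let ?b = "(r, c)" and ?N = "card S"
  have cS: "card (S - {?b}) = ?N - 1" and N1: "1 \<le> ?N"
    using assms(1,2) by (auto simp: Suc_le_eq card_gt_0_iff)
  have T: "bij_betw T (S - {?b}) {1..?N - 1}" "\<forall>x. x \<notin> S - {?b} \<longrightarrow> T x = 0"
    "\<forall>i j j'. (i, j) \<in> S - {?b} \<and> (i, j') \<in> S - {?b} \<and> j < j' \<longrightarrow> T (i, j) < T (i, j')"
    "\<forall>i i' j. (i, j) \<in> S - {?b} \<and> (i', j) \<in> S - {?b} \<and> i < i' \<longrightarrow> T (i, j) < T (i', j)"
    using assms(3) unfolding standard_tableaux_def cS by auto
  have lt: "T x < ?N" if "x \<in> S - {?b}" for x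
    using standard_tableau_range[OF assms(3) that] N1 cS by auto
  have "bij_betw (T(?b := ?N)) S {1..?N}"
    unfolding bij_betw_def
  proof
    show "inj_on (T(?b := ?N)) S"
      using T(1) lt unfolding bij_betw_def inj_on_def
      by (metis Diff_iff fun_upd_apply less_irrefl singletonD)
    have "(T(?b := ?N)) ` S = insert ?N (T ` (S - {?b}))"
      using assms(2) by (auto simp: image_iff)
    also have "\<dots> = {1..?N}" using T(1) N1 by (auto simp: bij_betw_def)
    finally show "(T(?b := ?N)) ` S = {1..?N}" .
  qed
  moreover have "(T(?b := ?N)) (i, j) < (T(?b := ?N)) (i, j')"
    if "(i, j) \<in> S" "(i, j') \<in> S" "j < j'" for i j j'
    using that T(3) lt[of "(i, j)"] row_end[of j'] by (cases "(i, j) = ?b") auto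
  moreover have "(T(?b := ?N)) (i, j) < (T(?b := ?N)) (i', j)"
    if "(i, j) \<in> S" "(i', j) \<in> S" "i < i'" for i i' j
    using that T(4) lt[of "(i, j)"] col_end[of i'] by (cases "(i, j) = ?b") auto
  ultimately show ?thesis using T(2) assms(2) by (auto simp: standard_tableaux_def)
qed

lemma card_standard_tableaux_max_at_corner:
  assumes "finite S" "(r, c) \<in> S"
    and "\<And>j. (r, j) \<in> S \<Longrightarrow> j \<le> c" "\<And>i. (i, c) \<in> S \<Longrightarrow> i \<le> r"
  shows "card {T \<in> standard_tableaux S. T (r, c) = card S} = card (standard_tableaux (S - {(r, c)}))"
proof (rule bij_betw_same_card[of "\<lambda>T. T((r, c) := 0)"],
    rule bij_betw_byWitness[where f'="\<lambda>T. T((r, c) := card S)"])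
  show "\<forall>T\<in>standard_tableaux (S - {(r, c)}). (T((r, c) := card S))((r, c) := 0) = T"
    by (auto simp: standard_tableaux_def fun_eq_iff)
  show "(\<lambda>T. T((r, c) := card S)) ` standard_tableaux (S - {(r, c)})
      \<subseteq> {T \<in> standard_tableaux S. T (r, c) = card S}"
    using standard_tableau_insert_max[OF assms(1,2) _ assms(3,4)] by auto
qed (use standard_tableau_delete_max[OF assms(1,2)] in auto)

lemma standard_tableau_max_entry_corner:
  assumes "T \<in> standard_tableaux S" "(r, c) \<in> S" "T (r, c) = card S"
  shows "(r, c + 1) \<notin> S" and "(r + 1, c) \<notin> S"
proof -
  have "T (r, c) < T x" if "x \<in> S" "x = (r, c + 1) \<or> x = (r + 1, c)" for x
    using assms(1,2) that unfolding standard_tableaux_def by auto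
  moreover have "T x \<le> card S" if "x \<in> S" for x
    using standard_tableau_range[OF assms(1) that] by simp
  ultimately show "(r, c + 1) \<notin> S" and "(r + 1, c) \<notin> S"
    using assms(3) by (metis not_le)+
qed

lemma max_entry_at_removable_corner:
  assumes "strict_part mu" "strict_part nu" "part_contains nu mu"
    and S: "S = shifted_diagram nu - shifted_diagram mu"
    and "T \<in> standard_tableaux S" "(r, c) \<in> S" "T (r, c) = card S"
  obtains la where "strict_part la" "adds_box_at la nu r" "part_contains la mu"
    and "c = r + part_at nu r"
proof -
  note corner = standard_tableau_max_entry_corner[OF assms(5-7)]
  have b: "1 \<le> r" "r + 1 \<le> c" "c \<le> r + part_at nu r" "(r, c) \<notin> shifted_diagram mu"
    using assms(6) S by (auto simp: shifted_diagram_eq)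
  have c: "c = r + part_at nu r"
  proof (rule ccontr)
    assume "c \<noteq> r + part_at nu r"
    then have "(r, c + 1) \<in> S" using b S by (auto simp: shifted_diagram_eq)
    then show False using corner(1) by blast
  qed
  have mu_r: "part_at mu r < part_at nu r" using b c by (auto simp: shifted_diagram_eq)
  have gap: "part_at nu (r + 1) = 0 \<or> part_at nu (r + 1) + 1 < part_at nu r"
  proof (rule ccontr)
    assume a: "\<not> ?thesis"
    then have p1: "0 < part_at nu (r + 1)" by simp
    have eq: "part_at nu (r + 1) + 1 = part_at nu r"
      using a strict_part_at_gap[OF assms(2) b(1) _ p1] by simp
    have "(r + 1, c) \<notin> shifted_diagram mu"
    proof
      assume "(r + 1, c) \<in> shifted_diagram mu"
      then have "0 < part_at mu (r + 1)" "part_at nu r - 1 \<le> part_at mu (r + 1)"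
        using c p1 eq by (auto simp: shifted_diagram_eq)
      then show False using strict_part_at_gap[OF assms(1) b(1), of "r + 1"] mu_r eq by simp
    qed
    then have "(r + 1, c) \<in> S" using S c eq p1 b by (auto simp: shifted_diagram_eq)
    then show False using corner(2) by blast
  qed
  obtain la where la: "strict_part la" "adds_box_at la nu r"
    using removable_corner[OF assms(2) b(1) _ gap] mu_r by auto
  moreover have "part_contains la mu"
    unfolding part_contains_def
  proof
    fix i
    show "part_at mu i \<le> part_at la i"
      using la(2) mu_r assms(3) unfolding adds_box_at_def part_contains_def
      by (cases "i = r") (auto, metis)
  qed
  ultimately show thesis using c by (rule that)
qed

definition added_box :: "nat list \<Rightarrow> nat list \<Rightarrow> nat \<times> nat" where
  "added_box nu la = the_elem (shifted_diagram nu - shifted_diagram la)"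

lemma added_box_eq: "adds_box_at la nu r \<Longrightarrow> added_box nu la = (r, r + part_at nu r)"
  using adds_box_at_diagram[of la nu r] by (simp add: added_box_def Diff_Diff_Int Int_absorb1)

lemma card_standard_tableaux_max_at_added_box:
  assumes "strict_part la" "adds_box_at la nu r" "part_contains la mu"
  defines "S \<equiv> shifted_diagram nu - shifted_diagram mu"
  shows "card {T \<in> standard_tableaux S. T (added_box nu la) = card S} = f_skew la mu"
proof -
  note box = adds_box_at_diagram[OF assms(2)]
  have "shifted_diagram mu \<subseteq> shifted_diagram la"
    using part_contains_imp_diagram_subset[OF assms(3)] .
  then have inS: "(r, r + part_at nu r) \<in> S"
    and S_minus: "S - {(r, r + part_at nu r)} = shifted_diagram la - shifted_diagram mu"
    using box by (auto simp: S_def)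
  have "card {T \<in> standard_tableaux S. T (r, r + part_at nu r) = card S}
      = card (standard_tableaux (S - {(r, r + part_at nu r)}))"
    using adds_box_at_corner[OF assms(1,2)]
    by (intro card_standard_tableaux_max_at_corner inS) (auto simp: S_def finite_shifted_diagram)
  then show ?thesis by (simp add: S_minus f_skew_def added_box_eq[OF assms(2)])
qed

lemma skew_diagram_nonempty:
  assumes "part_contains nu mu" "part_size mu < part_size nu"
  shows "shifted_diagram nu - shifted_diagram mu \<noteq> {}"
proof
  assume empty: "shifted_diagram nu - shifted_diagram mu = {}"
  have "part_at nu i \<le> part_at mu i" for i
  proof (cases "part_at nu i = 0")
    case False
    then have "(i, i + part_at nu i) \<in> shifted_diagram nu"
      using part_at_pos_imp_index[of nu i] by (simp add: shifted_diagram_eq)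
    then have "(i, i + part_at nu i) \<in> shifted_diagram mu" using empty by blast
    then show ?thesis by (simp add: shifted_diagram_eq)
  qed simp
  then have "part_at nu i = part_at mu i" for i
    using assms(1) by (simp add: part_contains_def le_antisym)
  then have "part_size nu = part_size mu"
    using part_size_eq_sum_part_at[of nu "length nu + length mu"]
      part_size_eq_sum_part_at[of mu "length nu + length mu"] by simp
  then show False using assms(2) by simp
qed

lemma skew_set_predecessor_iff:
  assumes "nu \<in> skew_set mu (Suc k)"
  shows "la \<in> skew_set mu k \<and> nu \<in> add_box la \<longleftrightarrow>
    strict_part la \<and> part_contains la mu \<and> (\<exists>r. adds_box_at la nu r)"
proof
  assume "la \<in> skew_set mu k \<and> nu \<in> add_box la"
  then show "strict_part la \<and> part_contains la mu \<and> (\<exists>r. adds_box_at la nu r)"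
    using add_box_imp_adds_box_at by (auto simp: skew_set_def) blast
next
  assume la: "strict_part la \<and> part_contains la mu \<and> (\<exists>r. adds_box_at la nu r)"
  then have "nu \<in> add_box la"
    using adds_box_at_imp_add_box assms by (auto simp: skew_set_def)
  moreover from this have "part_size la = part_size mu + k"
    using assms by (simp add: add_box_def skew_set_def)
  ultimately show "la \<in> skew_set mu k \<and> nu \<in> add_box la"
    using la by (simp add: skew_set_def)
qed

lemma inj_on_added_box:
  "inj_on (added_box nu) {la. strict_part la \<and> (\<exists>r. adds_box_at la nu r)}"
proof
  fix l1 l2
  assume "l1 \<in> {la. strict_part la \<and> (\<exists>r. adds_box_at la nu r)}"
    and "l2 \<in> {la. strict_part la \<and> (\<exists>r. adds_box_at la nu r)}"
    and eq: "added_box nu l1 = added_box nu l2"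
  then obtain r1 r2 where l: "strict_part l1" "strict_part l2" "adds_box_at l1 nu r1"
    "adds_box_at l2 nu r2"
    by blast
  then have "r1 = r2" using eq added_box_eq[OF l(3)] added_box_eq[OF l(4)] by simp
  then show "l1 = l2" using adds_box_at_unique l by blast
qed

lemma card_standard_tableaux_max_off_added_boxes:
  assumes "strict_part mu" "strict_part nu" "part_contains nu mu"
    and S: "S = shifted_diagram nu - shifted_diagram mu"
    and "(r, c) \<in> S"
    and "(r, c) \<notin> added_box nu `
      {la. strict_part la \<and> part_contains la mu \<and> (\<exists>r. adds_box_at la nu r)}"
  shows "card {T \<in> standard_tableaux S. T (r, c) = card S} = 0"
proof -
  have "{T \<in> standard_tableaux S. T (r, c) = card S} = {}"
  proof (rule ccontr)
    assume "{T \<in> standard_tableaux S. T (r, c) = card S} \<noteq> {}"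
    then obtain T where "T \<in> standard_tableaux S" "T (r, c) = card S" by blast
    then obtain la where la: "strict_part la" "adds_box_at la nu r" "part_contains la mu"
      and "c = r + part_at nu r"
      using max_entry_at_removable_corner[OF assms(1-4) _ assms(5)] by blast
    then have "(r, c) = added_box nu la" using added_box_eq by simp
    then show False using assms(6) la by blast
  qed
  then show ?thesis by (simp only: card.empty)
qed

lemma f_skew_branching:
  assumes "strict_part mu" "nu \<in> skew_set mu (Suc k)"
  shows "f_skew nu mu = (\<Sum>la\<in>{la \<in> skew_set mu k. nu \<in> add_box la}. f_skew la mu)"
proof -
  have snu: "strict_part nu" and numu: "part_contains nu mu"
    and sz: "part_size mu < part_size nu"
    using assms(2) by (auto simp: skew_set_def)
  define S where "S = shifted_diagram nu - shifted_diagram mu"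
  define L where "L = {la \<in> skew_set mu k. nu \<in> add_box la}"
  define top where "top b = card {T \<in> standard_tableaux S. T b = card S}" for b
  have finS: "finite S" by (simp add: S_def finite_shifted_diagram)
  have L: "L = {la. strict_part la \<and> part_contains la mu \<and> (\<exists>r. adds_box_at la nu r)}"
    using skew_set_predecessor_iff[OF assms(2)] by (auto simp: L_def)
  have "f_skew nu mu = (\<Sum>b\<in>S. top b)"
    unfolding f_skew_def top_def S_def
    using card_standard_tableaux_by_max_entry finS skew_diagram_nonempty[OF numu sz]
    by (simp add: S_def)
  also have "\<dots> = (\<Sum>b\<in>added_box nu ` L. top b)"
  proof (rule sum.mono_neutral_right[OF finS])
    show "added_box nu ` L \<subseteq> S"
    proof (rule image_subsetI)
      fix la assume "la \<in> L"
      then obtain r where r: "adds_box_at la nu r" and "part_contains la mu"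
        using L by blast
      then have "shifted_diagram mu \<subseteq> shifted_diagram la"
        by (simp add: part_contains_imp_diagram_subset)
      then show "added_box nu la \<in> S"
        using adds_box_at_diagram[OF r] added_box_eq[OF r] by (auto simp: S_def)
    qed
    show "\<forall>b\<in>S - added_box nu ` L. top b = 0"
      using card_standard_tableaux_max_off_added_boxes[OF assms(1) snu numu S_def]
      by (auto simp: top_def L)
  qed
  also have "\<dots> = (\<Sum>la\<in>L. top (added_box nu la))"
    by (rule sum.reindex[unfolded comp_def], rule inj_on_subset[OF inj_on_added_box]) (auto simp: L)
  also have "\<dots> = (\<Sum>la\<in>L. f_skew la mu)"
    using card_standard_tableaux_max_at_added_box by (intro sum.cong) (auto simp: top_def S_def L)
  finally show ?thesis by (simp add: L_def)
qed

definition box_weight :: "nat list \<Rightarrow> nat list \<Rightarrow> complex" where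
  "box_weight la nu = (if length la < length nu then 1 else 2)"

lemma Dop_eq_weighted_sum:
  assumes "strict_part la"
  shows "Dop g la = (\<Sum>nu\<in>add_box la. box_weight la nu * g nu) - g la"
proof -
  let ?A = "{nu \<in> add_box la. length nu > length la}"
  let ?B = "{nu \<in> add_box la. length nu = length la}"
  have AB: "add_box la = ?A \<union> ?B" using add_box_length[OF assms] by fastforce
  have "(\<Sum>nu\<in>add_box la. box_weight la nu * g nu)
      = (\<Sum>nu\<in>?A. box_weight la nu * g nu) + (\<Sum>nu\<in>?B. box_weight la nu * g nu)"
    by (subst AB, rule sum.union_disjoint) (auto intro: finite_subset[OF _ finite_add_box])
  also have "(\<Sum>nu\<in>?A. box_weight la nu * g nu) = (\<Sum>nu\<in>?A. g nu)"
    by (intro sum.cong) (auto simp: box_weight_def)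
  also have "(\<Sum>nu\<in>?B. box_weight la nu * g nu) = 2 * (\<Sum>nu\<in>?B. g nu)"
    by (simp add: sum_distrib_left box_weight_def)
  finally show ?thesis unfolding Dop_def by simp
qed

lemma f'_skew_branching:
  assumes "strict_part mu" "nu \<in> skew_set mu (Suc k)"
  shows "f'_skew nu mu
    = (\<Sum>la\<in>{la \<in> skew_set mu k. nu \<in> add_box la}. box_weight la nu * f'_skew la mu)"
proof -
  define e where "e la = int (part_size la) - int (part_size mu) - int (length la) + int (length mu)"
    for la
  have f': "f'_skew la mu = 2 powi e la * of_nat (f_skew la mu)" for la
    by (simp add: f'_skew_def e_def)
  have weight: "box_weight la nu * 2 powi e la = 2 powi e nu"
    if la: "strict_part la" "nu \<in> add_box la" for la
  proof -
    have "part_size nu = part_size la + 1" using la(2) by (simp add: add_box_def)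
    then consider "length nu = length la + 1" "e nu = e la"
      | "length nu = length la" "e nu = e la + 1"
      using add_box_length[OF la] by (auto simp: e_def)
    then show ?thesis by cases (simp_all add: box_weight_def power_int_add_1')
  qed
  have "(\<Sum>la\<in>{la \<in> skew_set mu k. nu \<in> add_box la}. box_weight la nu * f'_skew la mu)
      = (\<Sum>la\<in>{la \<in> skew_set mu k. nu \<in> add_box la}. 2 powi e nu * of_nat (f_skew la mu))"
  proof (rule sum.cong)
    fix la assume "la \<in> {la \<in> skew_set mu k. nu \<in> add_box la}"
    then have "strict_part la" "nu \<in> add_box la" by (auto simp: skew_set_def)
    then show "box_weight la nu * f'_skew la mu = 2 powi e nu * of_nat (f_skew la mu)"
      by (simp add: f' weight mult.assoc[symmetric])
  qed simp
  also have "\<dots> = f'_skew nu mu"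
    by (simp add: f_skew_branching[OF assms] sum_distrib_left f')
  finally show ?thesis ..
qed

lemma skew_sum_Suc:
  assumes "strict_part mu"
  shows "(\<Sum>la\<in>skew_set mu (Suc k). f'_skew la mu * g la)
       = (\<Sum>la\<in>skew_set mu k. f'_skew la mu * g la) + (\<Sum>la\<in>skew_set mu k. f'_skew la mu * Dop g la)"
proof -
  let ?h = "\<lambda>la nu. f'_skew la mu * box_weight la nu * g nu"
  have add_box_skew: "add_box la = {nu \<in> skew_set mu (Suc k). nu \<in> add_box la}"
    if "la \<in> skew_set mu k" for la
    using that part_contains_trans unfolding skew_set_def add_box_def by auto
  have "(\<Sum>la\<in>skew_set mu k. f'_skew la mu * Dop g la)
      = (\<Sum>la\<in>skew_set mu k. (\<Sum>nu\<in>add_box la. ?h la nu) - f'_skew la mu * g la)"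
    by (intro sum.cong) (auto simp: skew_set_def Dop_eq_weighted_sum right_diff_distrib
        sum_distrib_left mult.assoc)
  also have "\<dots> = (\<Sum>la\<in>skew_set mu k. \<Sum>nu\<in>add_box la. ?h la nu)
      - (\<Sum>la\<in>skew_set mu k. f'_skew la mu * g la)"
    by (simp add: sum_subtractf)
  also have "(\<Sum>la\<in>skew_set mu k. \<Sum>nu\<in>add_box la. ?h la nu)
      = (\<Sum>la\<in>skew_set mu k. \<Sum>nu\<in>{nu \<in> skew_set mu (Suc k). nu \<in> add_box la}. ?h la nu)"
    using add_box_skew by (intro sum.cong) auto
  also have "\<dots> = (\<Sum>nu\<in>skew_set mu (Suc k). \<Sum>la\<in>{la \<in> skew_set mu k. nu \<in> add_box la}. ?h la nu)"
    by (rule sum.swap_restrict) (simp_all add: finite_skew_set)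
  also have "\<dots> = (\<Sum>nu\<in>skew_set mu (Suc k). f'_skew nu mu * g nu)"
    by (intro sum.cong)
      (simp_all add: f'_skew_branching[OF assms] sum_distrib_left sum_distrib_right ac_simps)
  finally show ?thesis by simp
qed

theorem lemma2p2:
  fixes mu :: "nat list" and g :: "nat list \<Rightarrow> complex" and n :: nat
  assumes "strict_part mu"
  shows "(\<Sum>la\<in>skew_set mu n. f'_skew la mu * g la)
       = (\<Sum>la\<in>skew_set mu 0. f'_skew la mu * g la)
         + (\<Sum>k<n. \<Sum>la\<in>skew_set mu k. f'_skew la mu * Dop g la)"
  by (induction n) (simp_all add: skew_sum_Suc[OF assms])

end
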